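(* Let $(\mathscr{A},\star')$ be a left-non-degenerate weak RC-system on a quiver $\mathscr{A}$ over $\Lambda$. For composable $a|b$ define $a\rightharpoonup b:=c$ where $c$ is the unique arrow with $b=a\star' c$, and $a\leftharpoonup b:=(a\rightharpoonup b)\star' a$. Then $\sigma\colon a|b\mapsto(a\rightharpoonup b)|(a\leftharpoonup b)$ is a quiver-theoretic Yang--Baxter map on $\mathscr{A}$.
   Context: A weak RC-system $(Q,\star)$ is a quiver with a partial binary operation such that: $x\star y$ is defined only if $\mathfrak{s}(x)=\mathfrak{s}(y)$; whenever $x\star y$ is defined, $y\star x$ is defined, $\mathfrak{s}(x\star y)=\mathfrak{t}(x)$, $\mathfrak{s}(y\star x)=\mathfrak{t}(y)$, $\mathfrak{t}(x\star y)=\mathfrak{t}(y\star x)$; and whenever $x\star y$, $x\star z$, $(x\star y)\star(x\star z)$ are defined, $y\star z$ and $(y\star x)\star(y\star z)$ are defined and $(x\star y)\star(x\star z)=(y\star x)\star(y\star z)$. It is left-non-degenerate if each map $x\star\cdot\colon Q(\mathfrak{s}(x),\Lambda)\to Q(\mathfrak{t}(x),\Lambda)$ is a bijection ($Q(\lambda,\Lambda)$ = arrows with source $\lambda$). A quiver-theoretic Yang--Baxter map is a map $\sigma$ on the set of composable pairs $a|b$ ($\mathfrak{t}(a)=\mathfrak{s}(b)$) preserving the source of the first and target of the second arrow, satisfying $(\sigma\otimes\mathrm{id})(\mathrm{id}\otimes\sigma)(\sigma\otimes\mathrm{id})=(\mathrm{id}\otimes\sigma)(\sigma\otimes\mathrm{id})(\mathrm{id}\otimes\sigma)$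 on composable triples. *)

theory Defs
  imports Main
begin

definition quiver :: "'v set \<Rightarrow> 'a set \<Rightarrow> ('a \<Rightarrow> 'v) \<Rightarrow> ('a \<Rightarrow> 'v) \<Rightarrow> bool" where
  "quiver L Q s t \<longleftrightarrow> (\<forall>x\<in>Q. s x \<in> L \<and> t x \<in> L)"

definition weak_RC_system ::
  "'v set \<Rightarrow> 'a set \<Rightarrow> ('a \<Rightarrow> 'v) \<Rightarrow> ('a \<Rightarrow> 'v) \<Rightarrow> ('a \<Rightarrow> 'a \<Rightarrow> 'a option) \<Rightarrow> bool" where
  "weak_RC_system L Q s t op \<longleftrightarrow>
     quiver L Q s t \<and>
     \<comment> \<open>partial binary operation on Q, defined only if sources agree\<close>
     (\<forall>x y w. op x y = Some w \<longrightarrow> x \<in> Q \<and> y \<in> Q \<and> w \<in> Q \<and> s x = s y) \<and>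
     (\<forall>x\<in>Q. \<forall>y\<in>Q. \<forall>xy. op x y = Some xy \<longrightarrow>
        (\<exists>yx. op y x = Some yx \<and> s xy = t x \<and> s yx = t y \<and> t xy = t yx)) \<and>
     (\<forall>x\<in>Q. \<forall>y\<in>Q. \<forall>z\<in>Q. \<forall>xy xz w.
        op x y = Some xy \<and> op x z = Some xz \<and> op xy xz = Some w \<longrightarrow>
        (\<exists>yz yx. op y z = Some yz \<and> op y x = Some yx \<and> op yx yz = Some w))"

definition left_non_degenerate ::
  "'a set \<Rightarrow> ('a \<Rightarrow> 'v) \<Rightarrow> ('a \<Rightarrow> 'v) \<Rightarrow> ('a \<Rightarrow> 'a \<Rightarrow> 'a option) \<Rightarrow> bool" where
  "left_non_degenerate Q s t op \<longleftrightarrow>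
     (\<forall>x\<in>Q. (\<forall>y\<in>Q. s y = s x \<longrightarrow> op x y \<noteq> None) \<and>
        bij_betw (\<lambda>y. the (op x y)) {y\<in>Q. s y = s x} {y\<in>Q. s y = t x})"

definition rharp :: "'a set \<Rightarrow> ('a \<Rightarrow> 'v) \<Rightarrow> ('a \<Rightarrow> 'a \<Rightarrow> 'a option) \<Rightarrow> 'a \<Rightarrow> 'a \<Rightarrow> 'a" where
  "rharp Q s op a b = (THE c. c \<in> Q \<and> s c = s a \<and> op a c = Some b)"

definition lharp :: "'a set \<Rightarrow> ('a \<Rightarrow> 'v) \<Rightarrow> ('a \<Rightarrow> 'a \<Rightarrow> 'a option) \<Rightarrow> 'a \<Rightarrow> 'a \<Rightarrow> 'a" where
  "lharp Q s op a b = the (op (rharp Q s op a b) a)"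

definition derived_map :: "'a set \<Rightarrow> ('a \<Rightarrow> 'v) \<Rightarrow> ('a \<Rightarrow> 'a \<Rightarrow> 'a option) \<Rightarrow> 'a \<times> 'a \<Rightarrow> 'a \<times> 'a" where
  "derived_map Q s op = (\<lambda>(a, b). (rharp Q s op a b, lharp Q s op a b))"

definition composable_pairs :: "'a set \<Rightarrow> ('a \<Rightarrow> 'v) \<Rightarrow> ('a \<Rightarrow> 'v) \<Rightarrow> ('a \<times> 'a) set" where
  "composable_pairs Q s t = {(a, b). a \<in> Q \<and> b \<in> Q \<and> t a = s b}"

definition composable_triples :: "'a set \<Rightarrow> ('a \<Rightarrow> 'v) \<Rightarrow> ('a \<Rightarrow> 'v) \<Rightarrow> ('a \<times> 'a \<times> 'a) set" where
  "composable_triples Q s t = {(a, b, c). a \<in> Q \<and> b \<in> Q \<and> c \<in> Q \<and> t a = s b \<and> t b = s c}"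

definition sigma12 :: "('a \<times> 'a \<Rightarrow> 'a \<times> 'a) \<Rightarrow> 'a \<times> 'a \<times> 'a \<Rightarrow> 'a \<times> 'a \<times> 'a" where
  "sigma12 \<sigma> = (\<lambda>(a, b, c). (fst (\<sigma> (a, b)), snd (\<sigma> (a, b)), c))"

definition sigma23 :: "('a \<times> 'a \<Rightarrow> 'a \<times> 'a) \<Rightarrow> 'a \<times> 'a \<times> 'a \<Rightarrow> 'a \<times> 'a \<times> 'a" where
  "sigma23 \<sigma> = (\<lambda>(a, b, c). (a, fst (\<sigma> (b, c)), snd (\<sigma> (b, c))))"

definition quiver_YB_map ::
  "'a set \<Rightarrow> ('a \<Rightarrow> 'v) \<Rightarrow> ('a \<Rightarrow> 'v) \<Rightarrow> ('a \<times> 'a \<Rightarrow> 'a \<times> 'a) \<Rightarrow> bool" where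
  "quiver_YB_map Q s t \<sigma> \<longleftrightarrow>
     (\<forall>p\<in>composable_pairs Q s t.
        \<sigma> p \<in> composable_pairs Q s t \<and>
        s (fst (\<sigma> p)) = s (fst p) \<and> t (snd (\<sigma> p)) = t (snd p)) \<and>
     (\<forall>x\<in>composable_triples Q s t.
        sigma12 \<sigma> (sigma23 \<sigma> (sigma12 \<sigma> x)) = sigma23 \<sigma> (sigma12 \<sigma> (sigma23 \<sigma> x)))"

end

theory Submission
  imports Defs
begin

text \<open>By left non-degeneracy every composable pair is uniquely of the form
\<open>a | a \<star> c\<close> with \<open>s c = s a\<close>, and then \<open>a \<rightharpoonup> (a \<star> c) = c\<close>, so the derived map
sends it to \<open>c | c \<star> a\<close>. Likewise every composable triple is
\<open>a | a \<star> c | (a \<star> c) \<star> (a \<star> g)\<close> with \<open>a, c, g\<close> sharing their source. Following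
the triple through both sides of the braid relation, each side ends at
\<open>g | g \<star> c | (g \<star> c) \<star> (g \<star> a)\<close>; the only input needed is the RC identity
\<open>(x \<star> y) \<star> (x \<star> z) = (y \<star> x) \<star> (y \<star> z)\<close>, used once on the right-hand side and
twice on the left-hand side.\<close>

locale left_non_degenerate_weak_RC_system =
  fixes L :: "'v set" and Q :: "'a set" and s t :: "'a \<Rightarrow> 'v"
    and op :: "'a \<Rightarrow> 'a \<Rightarrow> 'a option"
  assumes weak_RC: "weak_RC_system L Q s t op"
    and left_nd: "left_non_degenerate Q s t op"
begin

lemma op_SomeD: "op x y = Some w \<Longrightarrow> x \<in> Q \<and> y \<in> Q \<and> w \<in> Q \<and> s x = s y"
  using weak_RC unfolding weak_RC_system_def by blast

lemma op_Some_swap: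
  "x \<in> Q \<Longrightarrow> y \<in> Q \<Longrightarrow> op x y = Some xy \<Longrightarrow>
    \<exists>yx. op y x = Some yx \<and> s xy = t x \<and> s yx = t y \<and> t xy = t yx"
  using weak_RC unfolding weak_RC_system_def by blast

lemma op_Some_RC:
  "x \<in> Q \<Longrightarrow> y \<in> Q \<Longrightarrow> z \<in> Q \<Longrightarrow>
    op x y = Some xy \<Longrightarrow> op x z = Some xz \<Longrightarrow> op xy xz = Some w \<Longrightarrow>
    \<exists>yz yx. op y z = Some yz \<and> op y x = Some yx \<and> op yx yz = Some w"
  using weak_RC unfolding weak_RC_system_def by blast

definition star :: "'a \<Rightarrow> 'a \<Rightarrow> 'a" (infixl "\<star>" 70)
  where "x \<star> y = the (op x y)"

lemma op_eq_star: "x \<in> Q \<Longrightarrow> y \<in> Q \<Longrightarrow> s y = s x \<Longrightarrow> op x y = Some (x \<star> y)"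
  using left_nd unfolding left_non_degenerate_def star_def by auto

lemma star_closed: "x \<in> Q \<Longrightarrow> y \<in> Q \<Longrightarrow> s y = s x \<Longrightarrow> x \<star> y \<in> Q"
  using op_eq_star op_SomeD by blast

lemma source_star: "x \<in> Q \<Longrightarrow> y \<in> Q \<Longrightarrow> s y = s x \<Longrightarrow> s (x \<star> y) = t x"
  using op_eq_star op_Some_swap by blast

lemma target_star_commute: "x \<in> Q \<Longrightarrow> y \<in> Q \<Longrightarrow> s y = s x \<Longrightarrow> t (x \<star> y) = t (y \<star> x)"
  using op_eq_star[of x y] op_eq_star[of y x] op_Some_swap[of x y] by auto

lemma star_RC:
  assumes "x \<in> Q" "y \<in> Q" "z \<in> Q" "s y = s x" "s z = s x"
  shows "(x \<star> y) \<star> (x \<star> z) = (y \<star> x) \<star> (y \<star> z)"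
proof -
  have "op (x \<star> y) (x \<star> z) = Some ((x \<star> y) \<star> (x \<star> z))"
    using assms by (simp add: op_eq_star star_closed source_star)
  then obtain yz yx where "op y z = Some yz" "op y x = Some yx"
      "op yx yz = Some ((x \<star> y) \<star> (x \<star> z))"
    using op_Some_RC[of x y z] assms op_eq_star by blast
  moreover have "yz = y \<star> z" "yx = y \<star> x"
    using calculation assms op_eq_star by auto
  ultimately show ?thesis
    unfolding star_def[of "y \<star> x"] by simp
qed

lemma bij_betw_star: "x \<in> Q \<Longrightarrow> bij_betw ((\<star>) x) {y \<in> Q. s y = s x} {y \<in> Q. s y = t x}"
  using left_nd unfolding left_non_degenerate_def star_def[abs_def] by auto

lemma composable_pairE:
  assumes "a \<in> Q" "b \<in> Q" "s b = t a"
  obtains c where "c \<in> Q" "s c = s a" "b = a \<star> c"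
  using bij_betw_star[of a] assms unfolding bij_betw_def by auto

lemma rharp_star: "a \<in> Q \<Longrightarrow> c \<in> Q \<Longrightarrow> s c = s a \<Longrightarrow> rharp Q s op a (a \<star> c) = c"
  unfolding rharp_def
proof (rule the_equality)
  assume ac: "a \<in> Q" "c \<in> Q" "s c = s a"
  then show "c \<in> Q \<and> s c = s a \<and> op a c = Some (a \<star> c)"
    using op_eq_star by auto
  fix d assume "d \<in> Q \<and> s d = s a \<and> op a d = Some (a \<star> c)"
  then show "d = c"
    using bij_betw_star[OF ac(1)] ac unfolding bij_betw_def inj_on_def star_def by auto
qed

lemma derived_map_star:
  "a \<in> Q \<Longrightarrow> c \<in> Q \<Longrightarrow> s c = s a \<Longrightarrow> derived_map Q s op (a, a \<star> c) = (c, c \<star> a)"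
  by (simp add: derived_map_def lharp_def rharp_star) (simp add: star_def)

lemma derived_map_composable:
  assumes "p \<in> composable_pairs Q s t"
  shows "derived_map Q s op p \<in> composable_pairs Q s t
    \<and> s (fst (derived_map Q s op p)) = s (fst p)
    \<and> t (snd (derived_map Q s op p)) = t (snd p)"
proof -
  obtain a b where ab: "p = (a, b)" "a \<in> Q" "b \<in> Q" "t a = s b"
    using assms unfolding composable_pairs_def by auto
  then obtain c where c: "c \<in> Q" "s c = s a" "b = a \<star> c"
    by (metis composable_pairE)
  then have "derived_map Q s op p = (c, c \<star> a)"
    using ab derived_map_star by simp
  then show ?thesis
    using ab c star_closed source_star target_star_commute
    unfolding composable_pairs_def by auto
qed

lemma composable_tripleE:
  assumes "(a, b, e) \<in> composable_triples Q s t"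
  obtains c g where "a \<in> Q" "c \<in> Q" "g \<in> Q" "s c = s a" "s g = s a"
    "b = a \<star> c" "e = (a \<star> c) \<star> (a \<star> g)"
proof -
  have abe: "a \<in> Q" "b \<in> Q" "e \<in> Q" "t a = s b" "t b = s e"
    using assms unfolding composable_triples_def by auto
  then obtain c where c: "c \<in> Q" "s c = s a" "b = a \<star> c"
    by (metis composable_pairE)
  with abe obtain f where f: "f \<in> Q" "s f = t a" "e = b \<star> f"
    by (metis composable_pairE)
  with abe obtain g where "g \<in> Q" "s g = s a" "f = a \<star> g"
    by (metis composable_pairE)
  with that abe c f show ?thesis by blast
qed

lemma derived_map_braid:
  assumes "x \<in> composable_triples Q s t"
  shows "sigma12 (derived_map Q s op) (sigma23 (derived_map Q s op) (sigma12 (derived_map Q s op) x))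
       = sigma23 (derived_map Q s op) (sigma12 (derived_map Q s op) (sigma23 (derived_map Q s op) x))"
proof -
  let ?\<sigma> = "derived_map Q s op"
  obtain a b e where x: "x = (a, b, e)" by (cases x) auto
  with assms obtain c g where Q: "a \<in> Q" "c \<in> Q" "g \<in> Q" and src: "s c = s a" "s g = s a"
    and b: "b = a \<star> c" and e: "e = (a \<star> c) \<star> (a \<star> g)"
    by (metis composable_tripleE)
  note facts = Q src star_closed source_star
  have "sigma12 ?\<sigma> (sigma23 ?\<sigma> (sigma12 ?\<sigma> x))
      = sigma12 ?\<sigma> (sigma23 ?\<sigma> (c, c \<star> a, (c \<star> a) \<star> (c \<star> g)))"
    using facts by (simp add: x b e sigma12_def derived_map_star star_RC[of a c g])
  also have "\<dots> = sigma12 ?\<sigma> (c, c \<star> g, (g \<star> c) \<star> (g \<star> a))"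
    using facts by (simp add: sigma23_def derived_map_star star_RC[of c g a])
  also have "\<dots> = (g, g \<star> c, (g \<star> c) \<star> (g \<star> a))"
    using facts by (simp add: sigma12_def derived_map_star)
  also have "\<dots> = sigma23 ?\<sigma> (g, g \<star> a, (g \<star> a) \<star> (g \<star> c))"
    using facts by (simp add: sigma23_def derived_map_star)
  also have "\<dots> = sigma23 ?\<sigma> (sigma12 ?\<sigma> (a, a \<star> g, (a \<star> g) \<star> (a \<star> c)))"
    using facts by (simp add: sigma12_def derived_map_star star_RC[of a g c])
  also have "\<dots> = sigma23 ?\<sigma> (sigma12 ?\<sigma> (sigma23 ?\<sigma> x))"
    using facts by (simp add: x b e sigma23_def derived_map_star)
  finally show ?thesis .
qed

end

theorem proposition6p4:
  fixes L :: "'v set" and Q :: "'a set" and s t :: "'a \<Rightarrow> 'v"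
    and op :: "'a \<Rightarrow> 'a \<Rightarrow> 'a option"
  assumes "weak_RC_system L Q s t op"
    and "left_non_degenerate Q s t op"
  shows "quiver_YB_map Q s t (derived_map Q s op)"
proof -
  interpret left_non_degenerate_weak_RC_system L Q s t op
    using assms by unfold_locales
  show ?thesis
    unfolding quiver_YB_map_def
    using derived_map_composable derived_map_braid by blast
qed

end
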